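(* Let $\mathcal K$ be a quantum channel on $n\times n$ matrices described by Kraus operators $K_1,\dots,K_d\in\mathbb C^{n\times n}$ (with $\mathcal K(\rho)=\sum_j K_j\rho K_j^\dagger$, $\sum_j K_j^\dagger K_j=I_n$) such that $\mathrm{Tr}(K_j)=0$ for $j=2,\dots,d$. Then $$\cos^{-1}\left[\tfrac1n\,\lvert\mathrm{Tr}(K_1)\rvert\right]\le\lVert\mathcal K\rVert,$$ with $\cos^{-1}$ taking values in $[0,\pi]$.
   Context: For a unitary matrix $U$ of size $r$ with eigenvalues $e^{i\theta_j}$, $\theta_j\in(-\pi,\pi]$, its time-energy cost is $\lVert U\rVert=\max_{1\le j\le r}|\theta_j|$. For a quantum channel $\mathcal K$ acting on an $n$-dimensional system $A$, its time-energy cost is $\lVert\mathcal K\rVert=\inf_U\lVert U\rVert$, where the infimum is over all finite-dimensional ancilla systems $B$ with a fixed standard state $|0\rangle_B$ and all unitaries $U_{BA}$ on $B\otimes A$ such that $\mathcal K(\rho)=\mathrm{Tr}_B[U_{BA}(|0\rangle_B\langle 0|\otimes\rho_A)U_{BA}^\dagger]$ for all density matrices $\rho$ on $A$. *)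

theory Defs
  imports "Jordan_Normal_Form.Char_Poly"
begin

definition adj :: "complex mat \<Rightarrow> complex mat" where
  "adj A = mat (dim_col A) (dim_row A) (\<lambda>(i,j). cnj (A $$ (j,i)))"

definition mtrace :: "complex mat \<Rightarrow> complex" where
  "mtrace A = (\<Sum>i<dim_row A. A $$ (i,i))"

definition unitary_mat :: "nat \<Rightarrow> complex mat \<Rightarrow> bool" where
  "unitary_mat r U \<longleftrightarrow> U \<in> carrier_mat r r \<and> U * adj U = 1\<^sub>m r \<and> adj U * U = 1\<^sub>m r"

definition density_mat :: "nat \<Rightarrow> complex mat \<Rightarrow> bool" where
  "density_mat n \<rho> \<longleftrightarrow> \<rho> \<in> carrier_mat n n \<and> adj \<rho> = \<rho> \<and>
     (\<forall>v \<in> carrier_vec n. \<exists>t::real. t \<ge> 0 \<and> conjugate v \<bullet> (\<rho> *\<^sub>v v) = complex_of_real t) \<and>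
     mtrace \<rho> = 1"

text \<open>Time-energy cost of a unitary: max |theta_j| over eigenvalues e^{i theta_j}, theta_j in (-pi,pi].
  Isabelle's Arg takes values in (-pi,pi].\<close>
definition unitary_cost :: "complex mat \<Rightarrow> real" where
  "unitary_cost U = Max {\<bar>Arg z\<bar> | z. eigenvalue U z}"

definition kraus_channel :: "nat \<Rightarrow> complex mat list \<Rightarrow> complex mat \<Rightarrow> complex mat" where
  "kraus_channel n Ks \<rho> = mat n n (\<lambda>(a,a'). \<Sum>j<length Ks. (Ks ! j * \<rho> * adj (Ks ! j)) $$ (a,a'))"

definition kraus_ops :: "nat \<Rightarrow> complex mat list \<Rightarrow> bool" where
  "kraus_ops n Ks \<longleftrightarrow> (\<forall>K \<in> set Ks. K \<in> carrier_mat n n) \<and>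
     mat n n (\<lambda>(a,a'). \<Sum>j<length Ks. (adj (Ks ! j) * Ks ! j) $$ (a,a')) = 1\<^sub>m n"

text \<open>Composite system B \<otimes> A with dim B = m, dim A = n; basis index (b,a) \<mapsto> b*n + a.
  |0><0|_B \<otimes> \<rho>_A, and the partial trace over B.\<close>
definition anc_embed :: "nat \<Rightarrow> nat \<Rightarrow> complex mat \<Rightarrow> complex mat" where
  "anc_embed m n \<rho> = mat (m*n) (m*n)
     (\<lambda>(i,j). if i < n \<and> j < n then \<rho> $$ (i,j) else 0)"

definition ptrace_B :: "nat \<Rightarrow> nat \<Rightarrow> complex mat \<Rightarrow> complex mat" where
  "ptrace_B m n M = mat n n (\<lambda>(a,a'). \<Sum>b<m. M $$ (b*n + a, b*n + a'))"

definition dilation :: "nat \<Rightarrow> (complex mat \<Rightarrow> complex mat) \<Rightarrow> nat \<Rightarrow> complex mat \<Rightarrow> bool" where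
  "dilation n \<Phi> m U \<longleftrightarrow> m \<ge> 1 \<and> unitary_mat (m*n) U \<and>
     (\<forall>\<rho>. density_mat n \<rho> \<longrightarrow> \<Phi> \<rho> = ptrace_B m n (U * anc_embed m n \<rho> * adj U))"

definition channel_cost :: "nat \<Rightarrow> (complex mat \<Rightarrow> complex mat) \<Rightarrow> real" where
  "channel_cost n \<Phi> = Inf {unitary_cost U | U m. dilation n \<Phi> m U}"

end

theory Submission
  imports Defs "Jordan_Normal_Form.Schur_Decomposition" "Jordan_Normal_Form.Spectral_Radius"
begin

text \<open>
  Let \<open>U\<close> be any dilation of the channel on an ancilla of dimension \<open>m\<close>, and let
  \<open>U\<^sub>b = \<langle>b|U|0\<rangle>\<close> be its blocks. Both \<open>(K\<^sub>j)\<close> and \<open>(U\<^sub>b)\<close> are Kraus families of the same channel,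
  so (testing against pure states) \<open>\<Sum>\<^sub>j vec K\<^sub>j vec K\<^sub>j\<^sup>* = \<Sum>\<^sub>b vec U\<^sub>b vec U\<^sub>b\<^sup>*\<close>. Contracting with the
  trace functional gives \<open>\<Sum>\<^sub>b |Tr U\<^sub>b|\<^sup>2 = \<Sum>\<^sub>j |Tr K\<^sub>j|\<^sup>2 = |Tr K\<^sub>1|\<^sup>2\<close>, hence
  \<open>|\<Sum>\<^bsub>a<n\<^esub> U\<^sub>a\<^sub>a| = |Tr U\<^sub>0| \<le> |Tr K\<^sub>1|\<close>.
  On the other hand \<open>U\<close> is unitary, hence unitarily diagonalisable (Schur), so every diagonal
  entry is a convex combination of eigenvalues \<open>e\<^sup>i\<^sup>\<theta>\<close> with \<open>|\<theta>| \<le> \<parallel>U\<parallel>\<close>, giving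
  \<open>Re U\<^sub>a\<^sub>a \<ge> cos \<parallel>U\<parallel>\<close>. Summing over \<open>a < n\<close> yields \<open>n cos \<parallel>U\<parallel> \<le> |Tr K\<^sub>1|\<close>. Finally a
  dilation exists (complete the isometry obtained by stacking the \<open>K\<^sub>j\<close> to a unitary), so the
  infimum defining the cost of the channel is taken over a nonempty set.
\<close>

lemma adj_carrier [simp]: "A \<in> carrier_mat r c \<Longrightarrow> adj A \<in> carrier_mat c r"
  by (auto simp: adj_def)

lemma adj_dims [simp]: "dim_row (adj A) = dim_col A" "dim_col (adj A) = dim_row A"
  by (auto simp: adj_def)

lemma adj_index [simp]: "i < dim_col A \<Longrightarrow> j < dim_row A \<Longrightarrow> adj A $$ (i,j) = cnj (A $$ (j,i))"
  by (auto simp: adj_def)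

lemma adj_adj [simp]: "adj (adj A) = A"
  by (rule eq_matI) auto

lemma adj_one [simp]: "adj (1\<^sub>m n) = 1\<^sub>m n"
  by (rule eq_matI) auto

lemma adj_zero [simp]: "adj (0\<^sub>m r c) = 0\<^sub>m c r"
  by (rule eq_matI) auto

lemma adj_mult:
  assumes "A \<in> carrier_mat r k" "B \<in> carrier_mat k c"
  shows "adj (A * B) = adj B * adj A"
  using assms by (intro eq_matI) (auto simp: scalar_prod_def intro: sum.cong)

lemma adj_minus:
  assumes "A \<in> carrier_mat r c" "B \<in> carrier_mat r c"
  shows "adj (A - B) = adj A - adj B"
  using assms by (intro eq_matI) auto

lemma adj_four_block:
  assumes "A \<in> carrier_mat r1 c1" "B \<in> carrier_mat r1 c2" "C \<in> carrier_mat r2 c1" "D \<in> carrier_mat r2 c2"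
  shows "adj (four_block_mat A B C D) = four_block_mat (adj A) (adj C) (adj B) (adj D)"
  using assms by (intro eq_matI) (auto simp: four_block_mat_def)

lemma index_adj_mult:
  assumes "A \<in> carrier_mat r c" "B \<in> carrier_mat r d" "i < c" "j < d"
  shows "(adj A * B) $$ (i,j) = (\<Sum>k<r. cnj (A $$ (k,i)) * B $$ (k,j))"
  using assms by (auto simp: scalar_prod_def lessThan_atLeast0 intro!: sum.cong)

lemma index_mult_adj:
  assumes "A \<in> carrier_mat r c" "B \<in> carrier_mat d c" "i < r" "j < d"
  shows "(A * adj B) $$ (i,j) = (\<Sum>k<c. A $$ (i,k) * cnj (B $$ (j,k)))"
  using assms by (auto simp: scalar_prod_def lessThan_atLeast0 intro!: sum.cong)

lemma index_mult_mult_adj: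
  assumes "A \<in> carrier_mat p q" "X \<in> carrier_mat q q" "B \<in> carrier_mat r q" "i < p" "j < r"
  shows "(A * X * adj B) $$ (i,j) = (\<Sum>k<q. \<Sum>l<q. A $$ (i,k) * X $$ (k,l) * cnj (B $$ (j,l)))"
proof -
  have "(A * X * adj B) $$ (i,j) = (\<Sum>l<q. (\<Sum>k<q. A $$ (i,k) * X $$ (k,l)) * cnj (B $$ (j,l)))"
    using assms by (auto simp: scalar_prod_def lessThan_atLeast0 intro!: sum.cong)
  also have "\<dots> = (\<Sum>l<q. \<Sum>k<q. A $$ (i,k) * X $$ (k,l) * cnj (B $$ (j,l)))"
    by (simp add: sum_distrib_right)
  also have "\<dots> = (\<Sum>k<q. \<Sum>l<q. A $$ (i,k) * X $$ (k,l) * cnj (B $$ (j,l)))"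
    by (rule sum.swap)
  finally show ?thesis .
qed

lemma sum_mult_cnj_self: "(\<Sum>i\<in>A. f i * cnj (f i)) = complex_of_real (\<Sum>i\<in>A. (cmod (f i))\<^sup>2)"
  by (simp add: complex_norm_square del: of_real_power)

lemma sum_swap3: "(\<Sum>i\<in>A. \<Sum>j\<in>B. \<Sum>k\<in>C. f i j k) = (\<Sum>j\<in>B. \<Sum>k\<in>C. \<Sum>i\<in>A. f i j k)"
proof -
  have "(\<Sum>i\<in>A. \<Sum>j\<in>B. \<Sum>k\<in>C. f i j k) = (\<Sum>j\<in>B. \<Sum>i\<in>A. \<Sum>k\<in>C. f i j k)"
    by (rule sum.swap)
  also have "\<dots> = (\<Sum>j\<in>B. \<Sum>k\<in>C. \<Sum>i\<in>A. f i j k)"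
    by (rule sum.cong[OF refl], rule sum.swap)
  finally show ?thesis .
qed

lemma square_mat_mult_carrier:
  "A \<in> carrier_mat M M \<Longrightarrow> B \<in> carrier_mat M M \<Longrightarrow> A * B \<in> carrier_mat M M"
  by simp

lemma unitary_matI:
  assumes "Q \<in> carrier_mat M M" "adj Q * Q = 1\<^sub>m M"
  shows "unitary_mat M Q"
  using assms mat_mult_left_right_inverse[OF adj_carrier[OF assms(1)] assms(1)]
  by (simp add: unitary_mat_def)

lemma unitary_mat_carrier: "unitary_mat M Q \<Longrightarrow> Q \<in> carrier_mat M M"
  by (simp add: unitary_mat_def)

lemma unitary_mat_adj: "unitary_mat M Q \<Longrightarrow> unitary_mat M (adj Q)"
  by (auto simp: unitary_mat_def)

lemma unitary_mat_mult:
  assumes P: "unitary_mat M P" and Q: "unitary_mat M Q"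
  shows "unitary_mat M (P * Q)"
proof (rule unitary_matI)
  have Pc: "P \<in> carrier_mat M M" and Qc: "Q \<in> carrier_mat M M"
    using P Q by (auto simp: unitary_mat_def)
  then show "P * Q \<in> carrier_mat M M" by simp
  have "adj (P * Q) * (P * Q) = adj Q * (adj P * P) * Q"
    using Pc Qc by (simp add: adj_mult assoc_mult_mat[of _ M M _ M _ M] square_mat_mult_carrier)
  then show "adj (P * Q) * (P * Q) = 1\<^sub>m M"
    using P Qc Q by (simp add: unitary_mat_def)
qed

lemma unitary_conj_cancel:
  assumes Q: "unitary_mat M Q" and A: "A \<in> carrier_mat M M"
  shows "Q * (adj Q * A * Q) * adj Q = A"
proof -
  have Qc: "Q \<in> carrier_mat M M" using Q by (simp add: unitary_mat_def)
  have "Q * (adj Q * A * Q) * adj Q = (Q * adj Q) * A * (Q * adj Q)"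
    using Qc A by (simp add: assoc_mult_mat[of _ M M _ M _ M] square_mat_mult_carrier)
  then show ?thesis using Q A by (simp add: unitary_mat_def)
qed

lemma unitary_col_norm:
  assumes Q: "unitary_mat M Q" and k: "k < M"
  shows "(\<Sum>j<M. (cmod (Q $$ (j,k)))\<^sup>2) = 1"
proof -
  have Qc: "Q \<in> carrier_mat M M" using Q by (simp add: unitary_mat_def)
  have "complex_of_real (\<Sum>j<M. (cmod (Q $$ (j,k)))\<^sup>2) = (\<Sum>j<M. Q $$ (j,k) * cnj (Q $$ (j,k)))"
    by (rule sum_mult_cnj_self[symmetric])
  also have "\<dots> = (adj Q * Q) $$ (k,k)"
    by (simp add: index_adj_mult[OF Qc Qc k k] mult.commute)
  also have "\<dots> = 1" using Q k by (simp add: unitary_mat_def)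
  finally show ?thesis by (simp only: of_real_eq_1_iff)
qed

lemma unitary_row_norm:
  assumes Q: "unitary_mat M Q" and a: "a < M"
  shows "(\<Sum>k<M. (cmod (Q $$ (a,k)))\<^sup>2) = 1"
proof -
  have Qc: "Q \<in> carrier_mat M M" using Q by (simp add: unitary_mat_def)
  have "complex_of_real (\<Sum>k<M. (cmod (Q $$ (a,k)))\<^sup>2) = (\<Sum>k<M. Q $$ (a,k) * cnj (Q $$ (a,k)))"
    by (rule sum_mult_cnj_self[symmetric])
  also have "\<dots> = (Q * adj Q) $$ (a,a)"
    by (rule index_mult_adj[OF Qc Qc a a, symmetric])
  also have "\<dots> = 1" using Q a by (simp add: unitary_mat_def)
  finally show ?thesis by (simp only: of_real_eq_1_iff)
qed

subsection \<open>Unitary Schur decomposition\<close>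

lemma unitary_mat_block_diag:
  assumes Q: "unitary_mat N Q"
  shows "unitary_mat (Suc N) (four_block_mat (1\<^sub>m 1) (0\<^sub>m 1 N) (0\<^sub>m N 1) Q)"
    (is "unitary_mat _ ?B")
proof (rule unitary_matI)
  have Qc: "Q \<in> carrier_mat N N" and QQ: "adj Q * Q = 1\<^sub>m N"
    using Q by (auto simp: unitary_mat_def)
  show "?B \<in> carrier_mat (Suc N) (Suc N)"
    using four_block_carrier_mat[OF one_carrier_mat[of 1] Qc] by simp
  have adjB: "adj ?B = four_block_mat (1\<^sub>m 1) (0\<^sub>m 1 N) (0\<^sub>m N 1) (adj Q)"
    using Qc by (subst adj_four_block[of _ 1 1 _ N _ N]) (auto intro: eq_matI)
  show "adj ?B * ?B = 1\<^sub>m (Suc N)"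
    unfolding adjB using Qc
    by (subst mult_four_block_mat[of _ 1 1 _ N _ N]) (auto simp: QQ four_block_one_mat[of 1 N, simplified])
qed

lemma unitary_mat_with_first_col:
  fixes v :: "complex vec"
  assumes v: "v \<in> carrier_vec M" and v0: "v \<noteq> 0\<^sub>v M"
  shows "\<exists>W c. unitary_mat M W \<and> (\<forall>k<M. W $$ (k,0) = c * v $ k)"
proof -
  interpret cof_vec_space M "TYPE(complex)" .
  define b where "b = basis_completion v"
  from basis_completion[OF v v0, folded b_def]
  have dist_b: "distinct b" and indep: "\<not> lin_dep (set b)" and bc: "set b \<subseteq> carrier_vec M"
    and hdb: "hd b = v" and len_b: "length b = M" by auto
  have M0: "M \<noteq> 0"
  proof
    assume "M = 0"
    then have "v = 0\<^sub>v M" using v by (intro eq_vecI) auto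
    then show False using v0 by simp
  qed
  from hdb len_b M0 obtain vs where bv: "b = v # vs" by (cases b) auto
  define ws where "ws = gram_schmidt M b"
  from gram_schmidt_result[OF bc dist_b indep ws_def]
  have orth: "corthogonal ws" and wsc: "set ws \<subseteq> carrier_vec M" and len: "length ws = M"
    by (auto simp: len_b)
  have ws0: "ws ! 0 = v"
    using gram_schmidt_hd[OF v, of vs] len M0 by (metis bv hd_conv_nth list.size(3) ws_def)
  have wsj: "ws ! j \<in> carrier_vec M" if "j < M" for j using wsc len that by auto
  define r where "r j = (\<Sum>k<M. (cmod (ws!j $ k))\<^sup>2)" for j
  have selfdot: "ws!j \<bullet>c ws!j = complex_of_real (r j)" if j: "j < M" for j
    using wsj[OF j] by (simp add: r_def scalar_prod_def lessThan_atLeast0 sum_mult_cnj_self)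
  have rpos: "r j > 0" if j: "j < M" for j
  proof -
    have "r j \<noteq> 0" using corthogonalD[OF orth, of j j] j len selfdot[OF j] by auto
    moreover have "r j \<ge> 0" by (simp add: r_def sum_nonneg)
    ultimately show ?thesis by linarith
  qed
  define W where "W = mat M M (\<lambda>(k,j). complex_of_real (1 / sqrt (r j)) * ws!j $ k)"
  have Wc: "W \<in> carrier_mat M M" by (simp add: W_def)
  have "adj W * W = 1\<^sub>m M"
  proof (rule eq_matI)
    fix i j assume "i < dim_row (1\<^sub>m M)" and "j < dim_col (1\<^sub>m M)"
    then have i: "i < M" and j: "j < M" by auto
    have "(adj W * W) $$ (i,j) = complex_of_real (1 / sqrt (r i) * (1 / sqrt (r j))) * (ws!j \<bullet>c ws!i)"
      using wsj[OF i] wsj[OF j] i j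
      by (simp add: index_adj_mult[OF Wc Wc i j] W_def sum_distrib_left scalar_prod_def
          lessThan_atLeast0 mult_ac)
    also have "\<dots> = 1\<^sub>m M $$ (i,j)"
    proof (cases "i = j")
      case True
      have "complex_of_real (1 / sqrt (r j) * (1 / sqrt (r j))) * complex_of_real (r j) = 1"
        using rpos[OF j] by (simp flip: of_real_mult)
      then show ?thesis using True selfdot[OF j] i by simp
    next
      case False
      then show ?thesis using corthogonalD[OF orth, of j i] i j len by auto
    qed
    finally show "(adj W * W) $$ (i,j) = 1\<^sub>m M $$ (i,j)" .
  qed (auto simp: W_def)
  then have "unitary_mat M W" by (rule unitary_matI[OF Wc])
  moreover have "\<forall>k<M. W $$ (k,0) = complex_of_real (1 / sqrt (r 0)) * v $ k"
    using M0 ws0 by (simp add: W_def)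
  ultimately show ?thesis by blast
qed

lemma unitary_deflation:
  fixes A :: "complex mat"
  assumes A: "A \<in> carrier_mat (Suc N) (Suc N)"
  shows "\<exists>W A1 A2 A3. unitary_mat (Suc N) W \<and> A1 \<in> carrier_mat 1 1 \<and> A2 \<in> carrier_mat 1 N
    \<and> A3 \<in> carrier_mat N N \<and> adj W * A * W = four_block_mat A1 A2 (0\<^sub>m N 1) A3"
proof -
  let ?M = "Suc N"
  from spectrum_non_empty[OF A] obtain e where "eigenvalue A e" by (auto simp: spectrum_def)
  then obtain v where v: "v \<in> carrier_vec ?M" and v0: "v \<noteq> 0\<^sub>v ?M" and ev: "A *\<^sub>v v = e \<cdot>\<^sub>v v"
    using A by (auto simp: eigenvalue_def eigenvector_def)
  from unitary_mat_with_first_col[OF v v0] obtain W c where W: "unitary_mat ?M W"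
    and W0: "\<And>k. k < ?M \<Longrightarrow> W $$ (k,0) = c * v $ k" by blast
  have Wc: "W \<in> carrier_mat ?M ?M" using W by (rule unitary_mat_carrier)
  define A' where "A' = adj W * A * W"
  have A'c: "A' \<in> carrier_mat ?M ?M" using Wc A by (simp add: A'_def square_mat_mult_carrier)
  have AW0: "(A * W) $$ (k,0) = e * W $$ (k,0)" if k: "k < ?M" for k
  proof -
    have "(A * W) $$ (k,0) = (\<Sum>l<?M. A $$ (k,l) * W $$ (l,0))"
      using A Wc k by (simp add: scalar_prod_def lessThan_atLeast0)
    also have "\<dots> = c * (\<Sum>l<?M. A $$ (k,l) * v $ l)"
      unfolding sum_distrib_left by (intro sum.cong refl) (simp add: W0)
    also have "(\<Sum>l<?M. A $$ (k,l) * v $ l) = (A *\<^sub>v v) $ k"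
      using A v k by (simp add: scalar_prod_def lessThan_atLeast0)
    finally show ?thesis using ev v k W0[OF k] by simp
  qed
  have A'0: "A' $$ (i,0) = (if i = 0 then e else 0)" if i: "i < ?M" for i
  proof -
    have "A' $$ (i,0) = (adj W * (A * W)) $$ (i,0)"
      using A Wc by (simp add: A'_def assoc_mult_mat[of _ ?M ?M _ ?M _ ?M])
    also have "\<dots> = (\<Sum>k<?M. cnj (W $$ (k,i)) * (A * W) $$ (k,0))"
      using A Wc by (intro index_adj_mult[OF Wc _ i]) auto
    also have "\<dots> = e * (\<Sum>k<?M. cnj (W $$ (k,i)) * W $$ (k,0))"
      unfolding sum_distrib_left by (intro sum.cong refl) (simp add: AW0)
    also have "(\<Sum>k<?M. cnj (W $$ (k,i)) * W $$ (k,0)) = (adj W * W) $$ (i,0)"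
      by (rule index_adj_mult[OF Wc Wc i, symmetric]) simp
    finally show ?thesis using W i by (simp add: unitary_mat_def)
  qed
  obtain A1 A2 A0 A3 where sb: "split_block A' 1 1 = (A1,A2,A0,A3)"
    by (cases "split_block A' 1 1") auto
  have dimA': "dim_row A' = 1 + N" "dim_col A' = 1 + N" using A'c by auto
  note blocks = split_block[OF sb dimA']
  have "A0 = 0\<^sub>m N 1"
  proof (rule eq_matI)
    fix i j assume "i < dim_row (0\<^sub>m N 1)" "j < dim_col (0\<^sub>m N 1)"
    then have i: "i < N" and j: "j = 0" by auto
    have "A0 $$ (i,j) = A' $$ (Suc i, 0)" using sb j i dimA' unfolding split_block_def Let_def by auto
    then show "A0 $$ (i,j) = 0\<^sub>m N 1 $$ (i,j)" using A'0[of "Suc i"] i j by simp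
  qed (use blocks in auto)
  then show ?thesis using W blocks unfolding A'_def by blast
qed

lemma unitary_schur:
  fixes A :: "complex mat"
  assumes "A \<in> carrier_mat M M"
  shows "\<exists>Q T. unitary_mat M Q \<and> T \<in> carrier_mat M M \<and> upper_triangular T \<and> A = Q * T * adj Q"
  using assms
proof (induction M arbitrary: A)
  case 0
  then have "unitary_mat 0 (1\<^sub>m 0)" "A = 1\<^sub>m 0 * A * adj (1\<^sub>m 0)" "upper_triangular A"
    by (auto simp: unitary_mat_def upper_triangular_def)
  then show ?case using 0 by blast
next
  case (Suc N A)
  let ?M = "Suc N"
  from unitary_deflation[OF Suc.prems] obtain W A1 A2 A3 where W: "unitary_mat ?M W"
    and A1: "A1 \<in> carrier_mat 1 1" and A2: "A2 \<in> carrier_mat 1 N" and A3: "A3 \<in> carrier_mat N N"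
    and WAW: "adj W * A * W = four_block_mat A1 A2 (0\<^sub>m N 1) A3" by blast
  from Suc.IH[OF A3] obtain Q3 T3 where Q3: "unitary_mat N Q3" and T3: "T3 \<in> carrier_mat N N"
    and ut3: "upper_triangular T3" and A3e: "A3 = Q3 * T3 * adj Q3" by blast
  have Q3c: "Q3 \<in> carrier_mat N N" using Q3 by (rule unitary_mat_carrier)
  define B where "B = four_block_mat (1\<^sub>m 1) (0\<^sub>m 1 N) (0\<^sub>m N 1) Q3"
  define T where "T = four_block_mat A1 (A2 * Q3) (0\<^sub>m N 1) T3"
  have B: "unitary_mat ?M B" unfolding B_def by (rule unitary_mat_block_diag[OF Q3])
  have Bc: "B \<in> carrier_mat ?M ?M" using B by (rule unitary_mat_carrier)
  have Tc: "T \<in> carrier_mat ?M ?M" using four_block_carrier_mat[OF A1 T3] by (simp add: T_def)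
  have ut: "upper_triangular T" unfolding T_def
    by (rule upper_triangular_four_block[OF A1 T3 _ ut3]) (use A1 in \<open>auto simp: upper_triangular_def\<close>)
  have adjB: "adj B = four_block_mat (1\<^sub>m 1) (0\<^sub>m 1 N) (0\<^sub>m N 1) (adj Q3)"
    unfolding B_def using Q3c by (subst adj_four_block[of _ 1 1 _ N _ N]) (auto intro: eq_matI)
  have "B * T * adj B = four_block_mat A1 (A2 * Q3) (0\<^sub>m N 1) (Q3 * T3) * adj B"
    unfolding B_def T_def using A1 A2 Q3c T3
    by (subst mult_four_block_mat[OF one_carrier_mat zero_carrier_mat zero_carrier_mat Q3c A1 _
          zero_carrier_mat T3]) (auto intro: mult_carrier_mat)
  also have "\<dots> = four_block_mat A1 (A2 * Q3 * adj Q3) (0\<^sub>m N 1) (Q3 * T3 * adj Q3)"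
    unfolding adjB using A1 A2 Q3c T3
    by (subst mult_four_block_mat[OF A1 _ zero_carrier_mat _ one_carrier_mat zero_carrier_mat
          zero_carrier_mat adj_carrier[OF Q3c]]) (auto intro!: mult_carrier_mat)
  also have "A2 * Q3 * adj Q3 = A2"
    using A2 Q3c Q3 by (simp add: assoc_mult_mat[of _ 1 N _ N _ N] unitary_mat_def)
  finally have BTB: "B * T * adj B = adj W * A * W" using WAW A3e by simp
  have Wc: "W \<in> carrier_mat ?M ?M" using W by (rule unitary_mat_carrier)
  have "(W * B) * T * adj (W * B) = W * (B * T * adj B) * adj W"
    using Wc Bc Tc by (simp add: adj_mult assoc_mult_mat[of _ ?M ?M _ ?M _ ?M] square_mat_mult_carrier)
  also have "\<dots> = A" unfolding BTB by (rule unitary_conj_cancel[OF W Suc.prems])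
  finally show ?case using unitary_mat_mult[OF W B] Tc ut by metis
qed

subsection \<open>Diagonal entries of unitary matrices\<close>

lemma unitary_norm_preserving:
  assumes U: "unitary_mat M U" and v: "v \<in> carrier_vec M"
  shows "(\<Sum>i<M. (cmod ((U *\<^sub>v v) $ i))\<^sup>2) = (\<Sum>k<M. (cmod (v $ k))\<^sup>2)"
proof -
  have Uc: "U \<in> carrier_mat M M" using U by (rule unitary_mat_carrier)
  have Uv: "(U *\<^sub>v v) $ i = (\<Sum>k<M. U $$ (i,k) * v $ k)" if "i < M" for i
    using Uc v that by (simp add: scalar_prod_def lessThan_atLeast0)
  have "(\<Sum>i<M. (U *\<^sub>v v) $ i * cnj ((U *\<^sub>v v) $ i))
      = (\<Sum>i<M. (\<Sum>k<M. U $$ (i,k) * v $ k) * cnj (\<Sum>l<M. U $$ (i,l) * v $ l))"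
    by (intro sum.cong refl) (simp add: Uv)
  also have "\<dots> = (\<Sum>i<M. \<Sum>k<M. \<Sum>l<M. v $ k * cnj (v $ l) * (cnj (U $$ (i,l)) * U $$ (i,k)))"
    by (simp add: cnj_sum sum_distrib_left sum_distrib_right mult_ac)
      (rule sum.cong[OF refl], rule sum.swap)
  also have "\<dots> = (\<Sum>k<M. \<Sum>l<M. \<Sum>i<M. v $ k * cnj (v $ l) * (cnj (U $$ (i,l)) * U $$ (i,k)))"
    by (rule sum_swap3)
  also have "\<dots> = (\<Sum>k<M. \<Sum>l<M. v $ k * cnj (v $ l) * (adj U * U) $$ (l,k))"
    by (intro sum.cong refl) (simp add: index_adj_mult[OF Uc Uc] sum_distrib_left)
  also have "\<dots> = (\<Sum>k<M. v $ k * cnj (v $ k))"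
    using U by (simp add: unitary_mat_def if_distrib cong: if_cong)
  finally show ?thesis by (simp only: sum_mult_cnj_self of_real_eq_iff)
qed

lemma unitary_eigenvalue_norm:
  assumes U: "unitary_mat M U" and ev: "eigenvalue U z"
  shows "cmod z = 1"
proof -
  have Uc: "U \<in> carrier_mat M M" using U by (rule unitary_mat_carrier)
  from ev Uc obtain v where v: "v \<in> carrier_vec M" and v0: "v \<noteq> 0\<^sub>v M" and e: "U *\<^sub>v v = z \<cdot>\<^sub>v v"
    by (auto simp: eigenvalue_def eigenvector_def)
  define s where "s = (\<Sum>k<M. (cmod (v $ k))\<^sup>2)"
  have "(cmod z)\<^sup>2 * s = s"
    using unitary_norm_preserving[OF U v] v
    by (simp add: e s_def norm_mult power_mult_distrib sum_distrib_left)
  moreover have "s \<noteq> 0"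
  proof
    assume "s = 0"
    then have "\<forall>k<M. v $ k = 0" by (simp add: s_def sum_nonneg_eq_0_iff)
    then have "v = 0\<^sub>v M" using v by (intro eq_vecI) auto
    then show False using v0 by simp
  qed
  ultimately show ?thesis using norm_ge_zero[of z] by (auto simp: power2_eq_1_iff)
qed

lemma eigenvalue_upper_triangular_diag:
  fixes T :: "'a :: field mat"
  assumes T: "T \<in> carrier_mat M M" and ut: "upper_triangular T" and k: "k < M"
  shows "eigenvalue T (T $$ (k,k))"
proof -
  have "poly (char_poly T) (T $$ (k,k)) = 0"
    unfolding char_poly_upper_triangular[OF T ut]
    by (rule linear_poly_root) (use k T in \<open>auto simp: diag_mat_def\<close>)
  then show ?thesis using eigenvalue_root_char_poly[OF T] by simp
qed

lemma eigenvalue_unitary_conj: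
  assumes Q: "unitary_mat M Q" and T: "T \<in> carrier_mat M M" and ev: "eigenvalue T z"
  shows "eigenvalue (Q * T * adj Q) z"
proof -
  have Qc: "Q \<in> carrier_mat M M" using Q by (rule unitary_mat_carrier)
  have A: "Q * T * adj Q \<in> carrier_mat M M" using Qc T by (simp add: square_mat_mult_carrier)
  have "similar_mat_wit (Q * T * adj Q) T Q (adj Q)"
    using Q Qc T A by (auto simp: similar_mat_wit_def unitary_mat_def)
  then have "char_poly (Q * T * adj Q) = char_poly T"
    by (intro char_poly_similar) (auto simp: similar_mat_def)
  then show ?thesis using ev eigenvalue_root_char_poly[OF A] eigenvalue_root_char_poly[OF T] by simp
qed

lemma unitary_upper_triangular_offdiag:
  assumes T: "unitary_mat M T" and ut: "upper_triangular T"
    and i: "i < M" and k: "k < M" and ik: "i \<noteq> k"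
  shows "T $$ (i,k) = 0"
proof -
  have Tc: "T \<in> carrier_mat M M" using T by (rule unitary_mat_carrier)
  have "(cmod (T $$ (k,k)))\<^sup>2 = 1"
    using unitary_eigenvalue_norm[OF T eigenvalue_upper_triangular_diag[OF Tc ut k]] by simp
  moreover have "(\<Sum>j<M. (cmod (T $$ (j,k)))\<^sup>2)
      = (cmod (T $$ (k,k)))\<^sup>2 + (\<Sum>j\<in>{..<M}-{k}. (cmod (T $$ (j,k)))\<^sup>2)"
    using k by (subst sum.remove[of _ k]) auto
  ultimately have "(\<Sum>j\<in>{..<M}-{k}. (cmod (T $$ (j,k)))\<^sup>2) = 0"
    using unitary_col_norm[OF T k] by simp
  then show ?thesis using i ik by (subst (asm) sum_nonneg_eq_0_iff) auto
qed

text \<open>In the unitary Schur form the triangular factor is diagonal, so each diagonal entry of \<open>U\<close> is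
  a convex combination of its eigenvalues.\<close>

lemma unitary_Re_diag_ge:
  assumes U: "unitary_mat M U" and c: "\<And>z. eigenvalue U z \<Longrightarrow> c \<le> Re z" and a: "a < M"
  shows "c \<le> Re (U $$ (a,a))"
proof -
  have Uc: "U \<in> carrier_mat M M" using U by (rule unitary_mat_carrier)
  from unitary_schur[OF Uc] obtain Q T where Q: "unitary_mat M Q" and Tc: "T \<in> carrier_mat M M"
    and ut: "upper_triangular T" and Ue: "U = Q * T * adj Q" by blast
  have Qc: "Q \<in> carrier_mat M M" using Q by (rule unitary_mat_carrier)
  have "T = adj Q * U * Q"
    using unitary_conj_cancel[OF unitary_mat_adj[OF Q] Tc] Ue by simp
  then have T: "unitary_mat M T"
    using Q U by (simp add: unitary_mat_mult unitary_mat_adj)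
  have "U $$ (a,a) = (\<Sum>k<M. \<Sum>l<M. Q $$ (a,k) * T $$ (k,l) * cnj (Q $$ (a,l)))"
    unfolding Ue by (rule index_mult_mult_adj[OF Qc Tc Qc a a])
  also have "\<dots> = (\<Sum>k<M. \<Sum>l<M. if l = k then Q $$ (a,k) * T $$ (k,k) * cnj (Q $$ (a,k)) else 0)"
    by (intro sum.cong refl) (auto simp: unitary_upper_triangular_offdiag[OF T ut])
  also have "\<dots> = (\<Sum>k<M. complex_of_real ((cmod (Q $$ (a,k)))\<^sup>2) * T $$ (k,k))"
    by (simp add: complex_norm_square mult_ac del: of_real_power)
  finally have ReU: "Re (U $$ (a,a)) = (\<Sum>k<M. (cmod (Q $$ (a,k)))\<^sup>2 * Re (T $$ (k,k)))"
    by (simp add: Re_sum)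
  have cT: "c \<le> Re (T $$ (k,k))" if "k < M" for k
    using c eigenvalue_unitary_conj[OF Q Tc eigenvalue_upper_triangular_diag[OF Tc ut that]] Ue
    by simp
  have "c = (\<Sum>k<M. (cmod (Q $$ (a,k)))\<^sup>2 * c)"
    using unitary_row_norm[OF Q a] by (simp add: sum_distrib_right[symmetric])
  also have "\<dots> \<le> (\<Sum>k<M. (cmod (Q $$ (a,k)))\<^sup>2 * Re (T $$ (k,k)))"
    by (intro sum_mono mult_left_mono) (auto simp: cT)
  finally show ?thesis unfolding ReU .
qed

subsection \<open>Comparing a dilation with the Kraus operators\<close>

lemma kraus_ops_carrier: "kraus_ops n Ks \<Longrightarrow> j < length Ks \<Longrightarrow> Ks ! j \<in> carrier_mat n n"
  by (simp add: kraus_ops_def)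

lemma density_mat_rank_one:
  fixes f :: "nat \<Rightarrow> complex"
  assumes s: "s = (\<Sum>i<n. (cmod (f i))\<^sup>2)" and s0: "s \<noteq> 0"
  shows "density_mat n (mat n n (\<lambda>(i,j). f i * cnj (f j) / complex_of_real s))"
proof -
  let ?r = "mat n n (\<lambda>(i,j). f i * cnj (f j) / complex_of_real s)"
  have spos: "s > 0" using s s0 by (metis sum_nonneg zero_le_power2 order_le_less)
  have herm: "adj ?r = ?r" by (rule eq_matI) auto
  have psd: "\<exists>t::real. t \<ge> 0 \<and> conjugate v \<bullet> (?r *\<^sub>v v) = complex_of_real t"
    if v: "v \<in> carrier_vec n" for v
  proof -
    define g where "g = (\<Sum>i<n. cnj (v $ i) * f i)"
    have "conjugate v \<bullet> (?r *\<^sub>v v)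
        = (\<Sum>i<n. cnj (v $ i) * (\<Sum>j<n. f i * cnj (f j) / complex_of_real s * v $ j))"
      using v by (auto simp: scalar_prod_def mult_mat_vec_def row_def lessThan_atLeast0 intro!: sum.cong)
    also have "\<dots> = (\<Sum>i<n. cnj (v $ i) * f i) * (\<Sum>j<n. cnj (f j) * v $ j) / complex_of_real s"
      by (simp add: sum_distrib_left sum_distrib_right sum_divide_distrib mult_ac) (subst sum.swap, simp add: mult_ac)
    also have "\<dots> = g * cnj g / complex_of_real s" by (simp add: g_def mult.commute)
    also have "g * cnj g / complex_of_real s = complex_of_real ((cmod g)\<^sup>2 / s)"
      using complex_norm_square[of g] by simp
    finally show ?thesis using spos g_def by (intro exI[of _ "(cmod g)\<^sup>2 / s"]) auto
  qed
  have tr: "mtrace ?r = 1"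
  proof -
    have "mtrace ?r = (\<Sum>i<n. f i * cnj (f i)) / complex_of_real s"
      by (simp add: mtrace_def sum_divide_distrib)
    also have "(\<Sum>i<n. f i * cnj (f i)) = complex_of_real s"
      by (simp add: s complex_norm_square del: of_real_power)
    finally show ?thesis using s0 by simp
  qed
  show ?thesis unfolding density_mat_def using herm psd tr by auto
qed

lemma sum_sesq_delta:
  fixes D :: "nat \<Rightarrow> nat \<Rightarrow> complex"
  assumes "a < n" "b < n"
  shows "(\<Sum>k<n. \<Sum>l<n. (if k = a then \<alpha> else 0) * cnj (if l = b then \<beta> else 0) * D k l)
    = \<alpha> * cnj \<beta> * D a b"
proof -
  have "\<And>k l. (if k = a then \<alpha> else 0) * cnj (if l = b then \<beta> else 0) * D k l
      = (if l = b then (if k = a then \<alpha> * cnj \<beta> * D a b else 0) else 0)"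
    by auto
  then show ?thesis using assms by simp
qed

lemma sum_sesq_two_deltas:
  fixes D :: "nat \<Rightarrow> nat \<Rightarrow> complex"
  assumes "a < n" "b < n" "a \<noteq> b"
  shows "(\<Sum>k<n. \<Sum>l<n. ((if k = a then \<alpha> else 0) + (if k = b then \<beta> else 0)) *
          cnj ((if l = a then \<alpha> else 0) + (if l = b then \<beta> else 0)) * D k l)
   = \<alpha> * cnj \<alpha> * D a a + \<alpha> * cnj \<beta> * D a b + \<beta> * cnj \<alpha> * D b a + \<beta> * cnj \<beta> * D b b"
proof -
  let ?x = "\<lambda>k. (if k = a then \<alpha> else 0)" and ?y = "\<lambda>k. (if k = b then \<beta> else 0)"
  have e: "\<And>k l. (?x k + ?y k) * cnj (?x l + ?y l) * D k l
      = ?x k * cnj (?x l) * D k l + ?x k * cnj (?y l) * D k l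
        + ?y k * cnj (?x l) * D k l + ?y k * cnj (?y l) * D k l"
    by (simp add: algebra_simps)
  show ?thesis unfolding e sum.distrib using sum_sesq_delta[OF assms(1) assms(1)] sum_sesq_delta[OF assms(1) assms(2)]
    sum_sesq_delta[OF assms(2) assms(1)] sum_sesq_delta[OF assms(2) assms(2)] by simp
qed

lemma vanishes_on_density_mats_imp_pure:
  fixes D :: "nat \<Rightarrow> nat \<Rightarrow> complex"
  assumes H: "\<And>\<rho>. density_mat n \<rho> \<Longrightarrow> (\<Sum>k<n. \<Sum>l<n. \<rho> $$ (k,l) * D k l) = 0"
  shows "(\<Sum>k<n. \<Sum>l<n. f k * cnj (f l) * D k l) = 0"
proof (cases "(\<Sum>i<n. (cmod (f i))\<^sup>2) = 0")
  case True
  then have "\<forall>i<n. f i = 0" by (simp add: sum_nonneg_eq_0_iff)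
  then show ?thesis by simp
next
  case False
  define s where "s = (\<Sum>i<n. (cmod (f i))\<^sup>2)"
  have "s \<noteq> 0" using False by (simp add: s_def)
  from H[OF density_mat_rank_one[OF s_def this]]
  have "(\<Sum>k<n. \<Sum>l<n. f k * cnj (f l) * D k l) / complex_of_real s = 0"
    by (simp add: sum_divide_distrib)
  then show ?thesis using \<open>s \<noteq> 0\<close> by simp
qed

text \<open>Polarization: test against the pure states along \<open>e\<^sub>a\<close>, \<open>e\<^sub>a + e\<^sub>b\<close> and
  \<open>e\<^sub>a + i e\<^sub>b\<close>.\<close>

lemma vanishes_on_density_mats_imp_zero:
  fixes D :: "nat \<Rightarrow> nat \<Rightarrow> complex"
  assumes H: "\<And>\<rho>. density_mat n \<rho> \<Longrightarrow> (\<Sum>k<n. \<Sum>l<n. \<rho> $$ (k,l) * D k l) = 0"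
    and a: "a < n" and b: "b < n"
  shows "D a b = 0"
proof -
  note pure = vanishes_on_density_mats_imp_pure[OF H]
  have diag: "D c c = 0" if c: "c < n" for c
    using pure[of "\<lambda>i. if i = c then 1 else 0"] sum_sesq_delta[OF c c, of 1 1 D] by simp
  show ?thesis
  proof (cases "a = b")
    case True
    then show ?thesis using diag a by simp
  next
    case False
    have two: "\<alpha> * cnj \<alpha> * D a a + \<alpha> * cnj \<beta> * D a b + \<beta> * cnj \<alpha> * D b a + \<beta> * cnj \<beta> * D b b = 0"
      for \<alpha> \<beta>
      using pure[of "\<lambda>i. (if i = a then \<alpha> else 0) + (if i = b then \<beta> else 0)"]
        sum_sesq_two_deltas[OF a b False, of \<alpha> \<beta> D] by simp
    have "D a b + D b a = 0" using two[of 1 1] diag a b by simp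
    moreover have "- \<i> * D a b + \<i> * D b a = 0" using two[of 1 \<i>] diag a b by simp
    ultimately have "\<i> * (-2 * D a b) = 0" by (simp add: algebra_simps eq_neg_iff_add_eq_0)
    then show ?thesis by simp
  qed
qed

lemma block_index_less: assumes "b < m" "x < (n::nat)" shows "b * n + x < m * n"
proof -
  have "Suc b * n \<le> m * n" using assms(1) by (intro mult_le_mono1) simp
  thus ?thesis using assms(2) by simp
qed

lemma index_conj_anc_embed:
  assumes U: "U \<in> carrier_mat (m*n) (m*n)" and m: "m \<ge> 1" and i: "i < m*n" and j: "j < m*n"
  shows "(U * anc_embed m n \<rho> * adj U) $$ (i,j)
    = (\<Sum>k<n. \<Sum>l<n. U $$ (i,k) * \<rho> $$ (k,l) * cnj (U $$ (j,l)))"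
proof -
  have A: "anc_embed m n \<rho> \<in> carrier_mat (m*n) (m*n)" by (simp add: anc_embed_def)
  have nle: "n \<le> m*n" using m by simp
  have "(U * anc_embed m n \<rho> * adj U) $$ (i,j)
      = (\<Sum>k<m*n. \<Sum>l<m*n. U $$ (i,k) * anc_embed m n \<rho> $$ (k,l) * cnj (U $$ (j,l)))"
    by (rule index_mult_mult_adj[OF U A U i j])
  also have "\<dots> = (\<Sum>k<m*n. \<Sum>l<m*n. if k < n \<and> l < n then U $$ (i,k) * \<rho> $$ (k,l) * cnj (U $$ (j,l)) else 0)"
    by (intro sum.cong refl) (auto simp: anc_embed_def)
  also have "\<dots> = (\<Sum>k<n. \<Sum>l<n. U $$ (i,k) * \<rho> $$ (k,l) * cnj (U $$ (j,l)))"
  proof -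
    have "(\<Sum>k<m*n. \<Sum>l<m*n. if k < n \<and> l < n then U $$ (i,k) * \<rho> $$ (k,l) * cnj (U $$ (j,l)) else 0)
       = (\<Sum>k<n. \<Sum>l<m*n. if k < n \<and> l < n then U $$ (i,k) * \<rho> $$ (k,l) * cnj (U $$ (j,l)) else 0)"
      by (rule sum.mono_neutral_right) (use nle in auto)
    also have "\<dots> = (\<Sum>k<n. \<Sum>l<n. if k < n \<and> l < n then U $$ (i,k) * \<rho> $$ (k,l) * cnj (U $$ (j,l)) else 0)"
      by (intro sum.cong refl sum.mono_neutral_right) (use nle in auto)
    finally show ?thesis by simp
  qed
  finally show ?thesis .
qed

lemma dilation_choi_eq:
  assumes K: "kraus_ops n Ks" and dil: "dilation n (kraus_channel n Ks) m U"
    and x: "x < n" and y: "y < n" and k: "k < n" and l: "l < n"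
  shows "(\<Sum>j<length Ks. Ks!j $$ (x,k) * cnj (Ks!j $$ (y,l)))
    = (\<Sum>b<m. U $$ (b*n+x, k) * cnj (U $$ (b*n+y, l)))"
proof -
  have m: "m \<ge> 1" and U: "U \<in> carrier_mat (m*n) (m*n)"
    and eq: "\<And>\<rho>. density_mat n \<rho> \<Longrightarrow> kraus_channel n Ks \<rho> = ptrace_B m n (U * anc_embed m n \<rho> * adj U)"
    using dil by (auto simp: dilation_def unitary_mat_def)
  note Kc = kraus_ops_carrier[OF K]
  let ?D = "\<lambda>k l. (\<Sum>j<length Ks. Ks!j $$ (x,k) * cnj (Ks!j $$ (y,l)))
    - (\<Sum>b<m. U $$ (b*n+x, k) * cnj (U $$ (b*n+y, l)))"
  have "?D k l = 0"
  proof (rule vanishes_on_density_mats_imp_zero[OF _ k l])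
    fix \<rho> assume d: "density_mat n \<rho>"
    hence r: "\<rho> \<in> carrier_mat n n" by (simp add: density_mat_def)
    have "kraus_channel n Ks \<rho> $$ (x,y) = ptrace_B m n (U * anc_embed m n \<rho> * adj U) $$ (x,y)"
      using eq[OF d] by simp
    also have "kraus_channel n Ks \<rho> $$ (x,y)
        = (\<Sum>j<length Ks. \<Sum>k<n. \<Sum>l<n. Ks!j $$ (x,k) * \<rho> $$ (k,l) * cnj (Ks!j $$ (y,l)))"
      unfolding kraus_channel_def using x y by (simp add: index_mult_mult_adj[OF Kc r Kc x y])
    also have "ptrace_B m n (U * anc_embed m n \<rho> * adj U) $$ (x,y)
        = (\<Sum>b<m. \<Sum>k<n. \<Sum>l<n. U $$ (b*n+x,k) * \<rho> $$ (k,l) * cnj (U $$ (b*n+y,l)))"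
      unfolding ptrace_B_def using x y by (simp add: index_conj_anc_embed[OF U m block_index_less block_index_less])
    finally have e: "(\<Sum>j<length Ks. \<Sum>k<n. \<Sum>l<n. Ks!j $$ (x,k) * \<rho> $$ (k,l) * cnj (Ks!j $$ (y,l)))
      = (\<Sum>b<m. \<Sum>k<n. \<Sum>l<n. U $$ (b*n+x,k) * \<rho> $$ (k,l) * cnj (U $$ (b*n+y,l)))" .
    have e1: "(\<Sum>k<n. \<Sum>l<n. \<rho> $$ (k,l) * (\<Sum>j<length Ks. Ks!j $$ (x,k) * cnj (Ks!j $$ (y,l))))
       = (\<Sum>j<length Ks. \<Sum>k<n. \<Sum>l<n. Ks!j $$ (x,k) * \<rho> $$ (k,l) * cnj (Ks!j $$ (y,l)))"
      by (simp add: sum_distrib_left mult_ac, rule sum_swap3[symmetric])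
    have e2: "(\<Sum>k<n. \<Sum>l<n. \<rho> $$ (k,l) * (\<Sum>b<m. U $$ (b*n+x, k) * cnj (U $$ (b*n+y, l))))
       = (\<Sum>b<m. \<Sum>k<n. \<Sum>l<n. U $$ (b*n+x,k) * \<rho> $$ (k,l) * cnj (U $$ (b*n+y,l)))"
      by (simp add: sum_distrib_left mult_ac, rule sum_swap3[symmetric])
    show "(\<Sum>k<n. \<Sum>l<n. \<rho> $$ (k,l) * ?D k l) = 0"
      using e e1 e2 by (simp add: right_diff_distrib sum_subtractf)
  qed
  thus ?thesis by simp
qed

lemma sum_sum_mult_cnj_swap:
  fixes g :: "'j \<Rightarrow> nat \<Rightarrow> complex"
  shows "(\<Sum>a\<in>A. \<Sum>a'\<in>A. \<Sum>j\<in>J. g j a * cnj (g j a'))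
    = (\<Sum>j\<in>J. (\<Sum>a\<in>A. g j a) * cnj (\<Sum>a'\<in>A. g j a'))"
proof -
  have "(\<Sum>j\<in>J. (\<Sum>a\<in>A. g j a) * cnj (\<Sum>a'\<in>A. g j a'))
      = (\<Sum>j\<in>J. \<Sum>a\<in>A. \<Sum>a'\<in>A. g j a * cnj (g j a'))"
    by (simp add: cnj_sum sum_distrib_left sum_distrib_right) (rule sum.cong[OF refl], rule sum.swap)
  also have "\<dots> = (\<Sum>a\<in>A. \<Sum>a'\<in>A. \<Sum>j\<in>J. g j a * cnj (g j a'))" by (rule sum_swap3)
  finally show ?thesis by simp
qed

lemma dilation_trace_le:
  assumes K: "kraus_ops n Ks" and ne: "Ks \<noteq> []"
    and tr0: "\<forall>j. 1 \<le> j \<and> j < length Ks \<longrightarrow> mtrace (Ks ! j) = 0"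
    and dil: "dilation n (kraus_channel n Ks) m U"
  shows "cmod (\<Sum>a<n. U $$ (a,a)) \<le> cmod (mtrace (Ks!0))"
proof -
  have m: "m \<ge> 1" using dil by (auto simp: dilation_def)
  note Kc = kraus_ops_carrier[OF K]
  let ?t = "\<lambda>j. (\<Sum>a<n. Ks!j $$ (a,a))"
  let ?u = "\<lambda>b. (\<Sum>a<n. U $$ (b*n+a,a))"
  have mt: "\<And>j. j < length Ks \<Longrightarrow> mtrace (Ks!j) = ?t j" using Kc by (auto simp: mtrace_def)
  have "(\<Sum>a<n. \<Sum>a'<n. \<Sum>j<length Ks. Ks!j $$ (a,a) * cnj (Ks!j $$ (a',a')))
      = (\<Sum>a<n. \<Sum>a'<n. \<Sum>b<m. U $$ (b*n+a, a) * cnj (U $$ (b*n+a', a')))"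
    by (intro sum.cong refl dilation_choi_eq[OF K dil]) auto
  hence "(\<Sum>j<length Ks. ?t j * cnj (?t j)) = (\<Sum>b<m. ?u b * cnj (?u b))"
    unfolding sum_sum_mult_cnj_swap .
  also have "(\<Sum>j<length Ks. ?t j * cnj (?t j)) = (\<Sum>j<length Ks. if j = 0 then ?t 0 * cnj (?t 0) else 0)"
    by (intro sum.cong refl) (use tr0 mt in auto)
  also have "\<dots> = ?t 0 * cnj (?t 0)" using ne by simp
  finally have "complex_of_real ((cmod (?t 0))\<^sup>2) = complex_of_real (\<Sum>b<m. (cmod (?u b))\<^sup>2)"
    by (simp add: complex_norm_square del: of_real_power)
  hence eq: "(cmod (?t 0))\<^sup>2 = (\<Sum>b<m. (cmod (?u b))\<^sup>2)" using of_real_eq_iff by blast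
  have "(cmod (?u 0))\<^sup>2 \<le> (\<Sum>b<m. (cmod (?u b))\<^sup>2)"
    by (rule member_le_sum) (use m in auto)
  hence "(cmod (?u 0))\<^sup>2 \<le> (cmod (?t 0))\<^sup>2" using eq by simp
  hence "cmod (?u 0) \<le> cmod (?t 0)" by (simp add: power2_le_iff_abs_le)
  thus ?thesis using mt[of 0] ne by simp
qed

lemma kraus_trace_le_dim:
  assumes K: "kraus_ops n Ks" and ne: "Ks \<noteq> []"
  shows "cmod (mtrace (Ks!0)) \<le> real n"
proof -
  note Kc = kraus_ops_carrier[OF K]
  have each: "cmod (Ks!0 $$ (a,a)) \<le> 1" if a: "a < n" for a
  proof -
    have "mat n n (\<lambda>(a,a'). \<Sum>j<length Ks. (adj (Ks ! j) * Ks ! j) $$ (a,a')) $$ (a,a) = 1\<^sub>m n $$ (a,a)"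
      using K by (simp add: kraus_ops_def)
    hence "(\<Sum>j<length Ks. (adj (Ks ! j) * Ks ! j) $$ (a,a)) = 1" using a by simp
    also have "(\<Sum>j<length Ks. (adj (Ks ! j) * Ks ! j) $$ (a,a))
        = (\<Sum>j<length Ks. \<Sum>x<n. cnj (Ks!j $$ (x,a)) * Ks!j $$ (x,a))"
      by (intro sum.cong refl) (simp add: index_adj_mult[OF Kc Kc a a])
    also have "\<dots> = complex_of_real (\<Sum>j<length Ks. \<Sum>x<n. (cmod (Ks!j $$ (x,a)))\<^sup>2)"
      by (simp add: complex_norm_square mult.commute del: of_real_power)
    finally have s1: "(\<Sum>j<length Ks. \<Sum>x<n. (cmod (Ks!j $$ (x,a)))\<^sup>2) = 1"
      using of_real_eq_1_iff by blast
    have "(cmod (Ks!0 $$ (a,a)))\<^sup>2 \<le> (\<Sum>x<n. (cmod (Ks!0 $$ (x,a)))\<^sup>2)"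
      by (rule member_le_sum) (use a in auto)
    also have "\<dots> \<le> (\<Sum>j<length Ks. \<Sum>x<n. (cmod (Ks!j $$ (x,a)))\<^sup>2)"
      by (rule member_le_sum[where f="\<lambda>j. \<Sum>x<n. (cmod (Ks!j $$ (x,a)))\<^sup>2"]) (use ne in \<open>auto intro: sum_nonneg\<close>)
    finally show ?thesis using s1 by (simp add: abs_square_le_1)
  qed
  have "cmod (mtrace (Ks!0)) = cmod (\<Sum>a<n. Ks!0 $$ (a,a))" using Kc[of 0] ne by (simp add: mtrace_def)
  also have "\<dots> \<le> (\<Sum>a<n. cmod (Ks!0 $$ (a,a)))" by (rule norm_sum)
  also have "\<dots> \<le> (\<Sum>a<n. 1)" by (rule sum_mono) (use each in auto)
  finally show ?thesis by simp
qed


subsection \<open>Existence of a dilation\<close>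

lemma sum_lessThan_mult_blocks:
  fixes g :: "nat \<Rightarrow> 'a::comm_monoid_add"
  shows "(\<Sum>i<d*n. g i) = (\<Sum>b<d. \<Sum>x<n. g (b*n + x))"
proof -
  have "(\<Sum>i<d*n. g i) = (\<Sum>b<d. sum g {b*n..<b*n+n})"
    using sum.nat_group[of g n d] by (simp add: mult.commute)
  also have "\<dots> = (\<Sum>b<d. \<Sum>x<n. g (b*n + x))"
  proof (rule sum.cong[OF refl])
    show "sum g {b*n..<b*n+n} = (\<Sum>x<n. g (b*n + x))" for b
      by (rule sum.reindex_bij_witness[where i="\<lambda>x. b*n+x" and j="\<lambda>i. i - b*n"]) auto
  qed
  finally show ?thesis .
qed

lemma unitary_completion_of_isometry:
  assumes V: "V \<in> carrier_mat N n" and VV: "adj V * V = 1\<^sub>m n"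
  shows "unitary_mat (N + n) (four_block_mat V (1\<^sub>m N - V * adj V) (0\<^sub>m n n) (adj V))"
proof (rule unitary_matI)
  define P where "P = V * adj V"
  define R where "R = 1\<^sub>m N - P"
  have aV: "adj V \<in> carrier_mat n N" using V by simp
  have P: "P \<in> carrier_mat N N" using V by (simp add: P_def)
  have R: "R \<in> carrier_mat N N" using minus_carrier_mat[OF P] by (simp add: R_def)
  have PV: "P * V = V" unfolding P_def using V aV VV by (simp add: assoc_mult_mat[OF V aV V])
  have VP: "adj V * P = adj V" unfolding P_def using V aV VV by (simp add: assoc_mult_mat[OF aV V aV, symmetric])
  have PP: "P * P = P"
    unfolding P_def using V aV VV by (simp add: assoc_mult_mat[of _ N n _ N _ N] assoc_mult_mat[OF aV V aV, symmetric])
  have "adj P = P" unfolding P_def by (simp add: adj_mult[OF V aV])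
  then have adjR: "adj R = R" unfolding R_def by (simp add: adj_minus[OF one_carrier_mat P])
  have VR: "adj V * R = 0\<^sub>m n N" unfolding R_def using aV P
    by (simp add: mult_minus_distrib_mat[OF aV one_carrier_mat P] VP right_mult_one_mat[OF aV] minus_r_inv_mat[OF aV])
  have RV: "R * V = 0\<^sub>m N n" unfolding R_def using V P
    by (simp add: minus_mult_distrib_mat[OF one_carrier_mat P V] PV left_mult_one_mat[OF V] minus_r_inv_mat[OF V])
  have RR: "R * R + P = 1\<^sub>m N"
  proof -
    have "R * R = R" unfolding R_def using P
      by (simp add: mult_minus_distrib_mat[OF minus_carrier_mat[OF P] one_carrier_mat P]
            minus_mult_distrib_mat[OF one_carrier_mat P P] PP) (intro eq_matI, use P in auto)
    then show ?thesis unfolding R_def using P by (intro eq_matI) auto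
  qed
  show "four_block_mat V (1\<^sub>m N - V * adj V) (0\<^sub>m n n) (adj V) \<in> carrier_mat (N + n) (N + n)"
    using four_block_carrier_mat[OF V aV, of R "0\<^sub>m n n"] by (simp add: R_def P_def add.commute)
  have "adj (four_block_mat V R (0\<^sub>m n n) (adj V)) * four_block_mat V R (0\<^sub>m n n) (adj V)
      = four_block_mat (adj V * V + 0\<^sub>m n n) (adj V * R + 0\<^sub>m n N) (R * V) (R * R + V * adj V)"
    using V R aV by (simp add: adj_four_block[OF V R zero_carrier_mat aV] adjR
        mult_four_block_mat[OF aV zero_carrier_mat R V V R zero_carrier_mat aV])
  also have "\<dots> = 1\<^sub>m (n + N)"
    using VV VR RV RR aV V by (simp add: P_def)
  finally show "adj (four_block_mat V (1\<^sub>m N - V * adj V) (0\<^sub>m n n) (adj V)) *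
      four_block_mat V (1\<^sub>m N - V * adj V) (0\<^sub>m n n) (adj V) = 1\<^sub>m (N + n)"
    by (simp add: R_def P_def add.commute)
qed

definition kraus_stack :: "nat \<Rightarrow> complex mat list \<Rightarrow> complex mat" where
  "kraus_stack n Ks = mat (length Ks * n) n (\<lambda>(i,j). Ks ! (i div n) $$ (i mod n, j))"

lemma kraus_stack_carrier: "kraus_stack n Ks \<in> carrier_mat (length Ks * n) n"
  by (simp add: kraus_stack_def)

lemma kraus_stack_index:
  assumes "b < length Ks" "x < n" "k < n"
  shows "kraus_stack n Ks $$ (b*n + x, k) = Ks ! b $$ (x, k)"
  using assms block_index_less[of b "length Ks" x n] by (simp add: kraus_stack_def)

lemma kraus_stack_isometry:
  assumes K: "kraus_ops n Ks"
  shows "adj (kraus_stack n Ks) * kraus_stack n Ks = 1\<^sub>m n"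
proof (rule eq_matI)
  let ?V = "kraus_stack n Ks"
  note V = kraus_stack_carrier[of n Ks] and Kc = kraus_ops_carrier[OF K]
  fix j j' assume "j < dim_row (1\<^sub>m n)" "j' < dim_col (1\<^sub>m n)"
  then have j: "j < n" and j': "j' < n" by auto
  have "(adj ?V * ?V) $$ (j,j') = (\<Sum>b<length Ks. \<Sum>x<n. cnj (?V $$ (b*n+x,j)) * ?V $$ (b*n+x,j'))"
    by (simp add: index_adj_mult[OF V V j j'] sum_lessThan_mult_blocks)
  also have "\<dots> = (\<Sum>b<length Ks. (adj (Ks!b) * Ks!b) $$ (j,j'))"
    by (intro sum.cong refl) (simp add: kraus_stack_index j j' index_adj_mult[OF Kc Kc j j'])
  also have "\<dots> = 1\<^sub>m n $$ (j,j')"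
    using K j j' unfolding kraus_ops_def by (metis (no_types, lifting) case_prod_conv index_mat(1))
  finally show "(adj ?V * ?V) $$ (j,j') = 1\<^sub>m n $$ (j,j')" .
qed (simp_all add: kraus_stack_def)

lemma dilation_of_kraus_blocks:
  assumes K: "kraus_ops n Ks" and m: "length Ks \<le> m" "1 \<le> m" and U: "unitary_mat (m * n) U"
    and blocks: "\<And>b x k. b < m \<Longrightarrow> x < n \<Longrightarrow> k < n \<Longrightarrow>
      U $$ (b*n + x, k) = (if b < length Ks then Ks ! b $$ (x, k) else 0)"
  shows "dilation n (kraus_channel n Ks) m U"
proof -
  note Kc = kraus_ops_carrier[OF K]
  have Uc: "U \<in> carrier_mat (m * n) (m * n)" using U by (rule unitary_mat_carrier)
  have "kraus_channel n Ks \<rho> = ptrace_B m n (U * anc_embed m n \<rho> * adj U)"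
    if "density_mat n \<rho>" for \<rho>
  proof (rule eq_matI)
    have r: "\<rho> \<in> carrier_mat n n" using that by (simp add: density_mat_def)
    fix x y assume "x < dim_row (ptrace_B m n (U * anc_embed m n \<rho> * adj U))"
      "y < dim_col (ptrace_B m n (U * anc_embed m n \<rho> * adj U))"
    then have x: "x < n" and y: "y < n" by (auto simp: ptrace_B_def)
    have "ptrace_B m n (U * anc_embed m n \<rho> * adj U) $$ (x,y)
        = (\<Sum>b<m. \<Sum>k<n. \<Sum>l<n. U $$ (b*n+x,k) * \<rho> $$ (k,l) * cnj (U $$ (b*n+y,l)))"
      unfolding ptrace_B_def using x y m
      by (simp add: index_conj_anc_embed[OF Uc _ block_index_less block_index_less])
    also have "\<dots> = (\<Sum>b<m. if b < length Ks then
        (\<Sum>k<n. \<Sum>l<n. Ks!b $$ (x,k) * \<rho> $$ (k,l) * cnj (Ks!b $$ (y,l))) else 0)"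
      by (intro sum.cong refl) (auto simp: blocks x y)
    also have "\<dots> = (\<Sum>b<length Ks. \<Sum>k<n. \<Sum>l<n. Ks!b $$ (x,k) * \<rho> $$ (k,l) * cnj (Ks!b $$ (y,l)))"
      using m by (simp add: sum.If_cases lessThan_def[symmetric] Int_absorb1 Int_absorb2)
    also have "\<dots> = kraus_channel n Ks \<rho> $$ (x,y)"
      unfolding kraus_channel_def using x y by (simp add: index_mult_mult_adj[OF Kc r Kc x y])
    finally show "kraus_channel n Ks \<rho> $$ (x,y)
        = ptrace_B m n (U * anc_embed m n \<rho> * adj U) $$ (x,y)"
      by simp
  qed (auto simp: kraus_channel_def ptrace_B_def)
  then show ?thesis using U m by (simp add: dilation_def)
qed

lemma kraus_dilation_exists:
  assumes K: "kraus_ops n Ks"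
  shows "\<exists>m U. dilation n (kraus_channel n Ks) m U"
proof -
  define d where "d = length Ks"
  define V where "V = kraus_stack n Ks"
  define U where "U = four_block_mat V (1\<^sub>m (d * n) - V * adj V) (0\<^sub>m n n) (adj V)"
  have V: "V \<in> carrier_mat (d * n) n" by (simp add: V_def d_def kraus_stack_carrier)
  have "unitary_mat (Suc d * n) U"
    using unitary_completion_of_isometry[OF V kraus_stack_isometry[OF K, folded V_def]]
    by (simp add: U_def add.commute)
  moreover have "U $$ (b*n + x, k) = (if b < d then Ks ! b $$ (x, k) else 0)"
    if "b < Suc d" "x < n" "k < n" for b x k
  proof (cases "b < d")
    case True
    then show ?thesis
      using that V block_index_less[of b d x n] by (simp add: U_def V_def d_def kraus_stack_index)
  next
    case False
    then have "b = d" using that by simp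
    then show ?thesis using that V by (simp add: U_def)
  qed
  ultimately have "dilation n (kraus_channel n Ks) (Suc d) U"
    by (intro dilation_of_kraus_blocks[OF K]) (simp_all add: d_def)
  then show ?thesis by blast
qed

lemma unitary_cost_ge:
  assumes U: "unitary_mat M U" and ev: "eigenvalue U z"
  shows "\<bar>Arg z\<bar> \<le> unitary_cost U"
proof -
  have "{\<bar>Arg z\<bar> | z. eigenvalue U z} = (\<lambda>z. \<bar>Arg z\<bar>) ` spectrum U"
    by (auto simp: spectrum_def)
  then have "finite {\<bar>Arg z\<bar> | z. eigenvalue U z}"
    using card_finite_spectrum(1)[OF unitary_mat_carrier[OF U]] by simp
  then show ?thesis unfolding unitary_cost_def using ev by (intro Max_ge) auto
qed

lemma unitary_cost_attained:
  assumes U: "unitary_mat M U" and M: "0 < M"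
  shows "\<exists>z. eigenvalue U z \<and> unitary_cost U = \<bar>Arg z\<bar>"
proof -
  have Uc: "U \<in> carrier_mat M M" using U by (rule unitary_mat_carrier)
  have "{\<bar>Arg z\<bar> | z. eigenvalue U z} = (\<lambda>z. \<bar>Arg z\<bar>) ` spectrum U"
    by (auto simp: spectrum_def)
  then have "finite {\<bar>Arg z\<bar> | z. eigenvalue U z}" "{\<bar>Arg z\<bar> | z. eigenvalue U z} \<noteq> {}"
    using card_finite_spectrum(1)[OF Uc] spectrum_non_empty[OF Uc M] by auto
  then have "unitary_cost U \<in> {\<bar>Arg z\<bar> | z. eigenvalue U z}"
    unfolding unitary_cost_def by (rule Max_in)
  then show ?thesis by blast
qed

lemma unitary_cost_bounds:
  assumes "unitary_mat M U" and "0 < M"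
  shows "0 \<le> unitary_cost U" and "unitary_cost U \<le> pi"
proof -
  obtain z where "unitary_cost U = \<bar>Arg z\<bar>" using unitary_cost_attained[OF assms] by blast
  moreover have "- pi < Arg z" "Arg z \<le> pi" using Arg_bounded[of z] by auto
  ultimately show "0 \<le> unitary_cost U" "unitary_cost U \<le> pi" by auto
qed

lemma cos_unitary_cost_le_Re_diag:
  assumes U: "unitary_mat M U" and a: "a < M"
  shows "cos (unitary_cost U) \<le> Re (U $$ (a,a))"
proof (rule unitary_Re_diag_ge[OF U _ a])
  fix z assume ev: "eigenvalue U z"
  have "cmod z = 1" by (rule unitary_eigenvalue_norm[OF U ev])
  then have "Re z = cos (Arg z)" using cos_Arg[of z] by (cases "z = 0") simp_all
  also have "\<dots> = cos \<bar>Arg z\<bar>" by (simp add: abs_if)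
  finally have "Re z = cos \<bar>Arg z\<bar>" .
  moreover have "cos (unitary_cost U) \<le> cos \<bar>Arg z\<bar>"
    using unitary_cost_ge[OF U ev] unitary_cost_bounds(2)[OF U] a by (intro cos_monotone_0_pi_le) auto
  ultimately show "cos (unitary_cost U) \<le> Re z" by simp
qed

lemma arccos_trace_le_unitary_cost:
  assumes n: "n \<ge> 1" and ne: "Ks \<noteq> []" and K: "kraus_ops n Ks"
    and tr0: "\<forall>j. 1 \<le> j \<and> j < length Ks \<longrightarrow> mtrace (Ks ! j) = 0"
    and dil: "dilation n (kraus_channel n Ks) m U"
  shows "arccos (cmod (mtrace (Ks ! 0)) / real n) \<le> unitary_cost U"
proof -
  have m: "m \<ge> 1" and U: "unitary_mat (m*n) U" using dil by (auto simp: dilation_def)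
  have nm: "n \<le> m * n" using m by simp
  let ?c = "unitary_cost U"
  have "real n * cos ?c = (\<Sum>a<n. cos ?c)" by simp
  also have "\<dots> \<le> (\<Sum>a<n. Re (U $$ (a,a)))"
    by (rule sum_mono, rule cos_unitary_cost_le_Re_diag[OF U], rule less_le_trans[OF _ nm]) simp
  also have "\<dots> = Re (\<Sum>a<n. U $$ (a,a))" by (simp add: Re_sum)
  also have "\<dots> \<le> cmod (\<Sum>a<n. U $$ (a,a))" by (rule complex_Re_le_cmod)
  also have "\<dots> \<le> cmod (mtrace (Ks!0))" by (rule dilation_trace_le[OF K ne tr0 dil])
  finally have "cos ?c \<le> cmod (mtrace (Ks!0)) / real n"
    using n by (simp add: field_simps)
  moreover have "cmod (mtrace (Ks!0)) / real n \<le> 1"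
    using kraus_trace_le_dim[OF K ne] n by simp
  ultimately have "arccos (cmod (mtrace (Ks!0)) / real n) \<le> arccos (cos ?c)"
    using cos_ge_minus_one by (intro arccos_le_arccos) auto
  also have "\<dots> = ?c"
    using unitary_cost_bounds[OF U] n m by (intro arccos_cos) auto
  finally show ?thesis .
qed

theorem lemma2:
  fixes n :: nat and Ks :: "complex mat list"
  assumes "n \<ge> 1"
    and "Ks \<noteq> []"
    and "kraus_ops n Ks"
    and "\<forall>j. 1 \<le> j \<and> j < length Ks \<longrightarrow> mtrace (Ks ! j) = 0"
  shows "arccos (cmod (mtrace (Ks ! 0)) / real n) \<le> channel_cost n (kraus_channel n Ks)"
  unfolding channel_cost_def
proof (rule cInf_greatest)
  show "{unitary_cost U |U m. dilation n (kraus_channel n Ks) m U} \<noteq> {}"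
    using kraus_dilation_exists[OF assms(3)] by blast
  fix c assume "c \<in> {unitary_cost U |U m. dilation n (kraus_channel n Ks) m U}"
  then show "arccos (cmod (mtrace (Ks ! 0)) / real n) \<le> c"
    using arccos_trace_le_unitary_cost[OF assms] by blast
qed

end
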